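(* Let $(f_k)_{k\in\mathbb Z}$ be the probability mass function of a sum of $m$ independent Bernoulli variables with parameters $p_1,\ldots,p_m$, and for each $j$ let $(f^{(j)}_k)_{k\in\mathbb Z}$ be the mass function of the sum omitting the $j$-th variable (all extended by $0$ outside their supports). Then for every $k\in\mathbb Z$ and every integer $q\ge1$, $$qf_kf_{k-q}=\sum_{j=1}^mp_j(1-p_j)\left[f^{(j)}_{k-1}f^{(j)}_{k-q}-f^{(j)}_kf^{(j)}_{k-q-1}\right].$$ *)

theory Defs
  imports "HOL-Probability.Probability"
begin

text \<open>Values outside the support are automatically 0.\<close>
definition bern_sum_pmf :: "(nat \<Rightarrow> real) \<Rightarrow> nat set \<Rightarrow> int pmf" where
  "bern_sum_pmf p I =
     map_pmf (\<lambda>b. \<Sum>j\<in>I. of_bool (b j)) (Pi_pmf I False (\<lambda>j. bernoulli_pmf (p j)))"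

end

theory Submission
  imports Defs
begin

text \<open>Removing variable j gives the recursion f k = (1 - p j) g_j k + p j g_j (k - 1),
  where g_j is the mass function without j. Iterating it yields the size-bias identity
  k f k = \<Sum>j. p j g_j (k - 1). Substituting the recursion into each summand of the
  right-hand side turns it into (\<Sum>j. p j g_j (k - 1)) f (k - q) - f k (\<Sum>j. p j g_j (k - q - 1)),
  which the size-bias identity evaluates to k f k f (k - q) - f k (k - q) f (k - q).\<close>

lemma pmf_map_add_int: "pmf (map_pmf (\<lambda>s. c + s) M) (k :: int) = pmf M (k - c)"
proof -
  have "pmf (map_pmf (\<lambda>s. c + s) M) (c + (k - c)) = pmf M (k - c)"
    by (rule pmf_map_inj') (auto simp: inj_def)
  then show ?thesis by simp
qed

lemma bern_sum_pmf_empty: "bern_sum_pmf p {} = return_pmf 0"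
  unfolding bern_sum_pmf_def by simp

lemma bern_sum_pmf_insert:
  assumes "finite I" "j \<notin> I"
  shows "bern_sum_pmf p (insert j I) =
    bernoulli_pmf (p j) \<bind> (\<lambda>y. map_pmf (\<lambda>s. of_bool y + s) (bern_sum_pmf p I))"
proof -
  have sum_upd: "(\<Sum>i\<in>insert j I. of_bool ((f(j := y)) i)) = (of_bool y :: int) + (\<Sum>i\<in>I. of_bool (f i))"
    for f y
  proof -
    have "(\<Sum>i\<in>I. of_bool ((f(j := y)) i)) = (\<Sum>i\<in>I. (of_bool (f i) :: int))"
      using assms by (intro sum.cong) auto
    moreover have "(\<Sum>i\<in>insert j I. (of_bool ((f(j := y)) i) :: int))
        = of_bool ((f(j := y)) j) + (\<Sum>i\<in>I. of_bool ((f(j := y)) i))"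
      using assms by (rule sum.insert)
    ultimately show ?thesis by (simp only: fun_upd_same)
  qed
  have "I \<inter> Collect (f(j := y)) = I \<inter> Collect f" for f y
    using assms by (auto split: if_splits)
  with assms sum_upd show ?thesis
    unfolding bern_sum_pmf_def
    by (auto intro!: bind_pmf_cong map_pmf_cong sum.cong
        simp: Pi_pmf_insert' map_bind_pmf bind_return_pmf map_pmf_def[symmetric] pmf.map_comp o_def
        simp del: sum_of_bool_eq)
qed

lemma pmf_bern_sum_insert:
  assumes "finite I" "j \<notin> I" "0 \<le> p j" "p j \<le> 1"
  shows "pmf (bern_sum_pmf p (insert j I)) k =
    (1 - p j) * pmf (bern_sum_pmf p I) k + p j * pmf (bern_sum_pmf p I) (k - 1)"
  using assms by (simp add: bern_sum_pmf_insert pmf_bind pmf_map_add_int)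

lemma pmf_bern_sum_remove:
  assumes "finite I" "j \<in> I" "0 \<le> p j" "p j \<le> 1"
  shows "pmf (bern_sum_pmf p I) k =
    (1 - p j) * pmf (bern_sum_pmf p (I - {j})) k + p j * pmf (bern_sum_pmf p (I - {j})) (k - 1)"
proof -
  from assms(2) have "I = insert j (I - {j})" by blast
  then show ?thesis
    using assms pmf_bern_sum_insert[of "I - {j}" j p k] by simp
qed

lemma pmf_bern_sum_size_biased:
  assumes "finite I" "\<forall>j\<in>I. 0 \<le> p j \<and> p j \<le> 1"
  shows "of_int k * pmf (bern_sum_pmf p I) k = (\<Sum>j\<in>I. p j * pmf (bern_sum_pmf p (I - {j})) (k - 1))"
  using assms
proof (induction I arbitrary: k rule: finite_induct)
  case empty
  then show ?case by (simp add: bern_sum_pmf_empty indicator_def)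
next
  case (insert a I)
  define f where "f J k = pmf (bern_sum_pmf p J) k" for J k
  have rec: "f (insert a J) k = (1 - p a) * f J k + p a * f J (k - 1)" if "J \<subseteq> I" for J k
    unfolding f_def using insert that by (intro pmf_bern_sum_insert) (auto intro: finite_subset)
  have IH: "of_int k * f I k = (\<Sum>j\<in>I. p j * f (I - {j}) (k - 1))" for k
    unfolding f_def using insert by auto
  have "(\<Sum>j\<in>insert a I. p j * f (insert a I - {j}) (k - 1))
      = p a * f I (k - 1) + (\<Sum>j\<in>I. p j * f (insert a (I - {j})) (k - 1))"
  proof -
    have "(\<Sum>j\<in>I. p j * f (insert a I - {j}) (k - 1)) = (\<Sum>j\<in>I. p j * f (insert a (I - {j})) (k - 1))"
      using insert by (intro sum.cong refl) (metis insert_Diff_if singletonD)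
    moreover have "insert a I - {a} = I" using insert by auto
    ultimately show ?thesis using insert by simp
  qed
  also have "(\<Sum>j\<in>I. p j * f (insert a (I - {j})) (k - 1))
      = (1 - p a) * (\<Sum>j\<in>I. p j * f (I - {j}) (k - 1)) + p a * (\<Sum>j\<in>I. p j * f (I - {j}) (k - 1 - 1))"
  proof -
    have "(\<Sum>j\<in>I. p j * f (insert a (I - {j})) (k - 1))
        = (\<Sum>j\<in>I. (1 - p a) * (p j * f (I - {j}) (k - 1)) + p a * (p j * f (I - {j}) (k - 1 - 1)))"
      by (intro sum.cong refl) (simp add: rec algebra_simps)
    then show ?thesis
      by (simp only: sum.distrib sum_distrib_left)
  qed
  also have "p a * f I (k - 1) + \<dots>
      = (1 - p a) * (of_int k * f I k) + p a * (of_int (k - 1) * f I (k - 1) + f I (k - 1))"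
    by (simp only: IH[symmetric]) (simp add: algebra_simps)
  also have "\<dots> = of_int k * f (insert a I) k"
    by (simp add: rec algebra_simps)
  finally show ?case unfolding f_def by simp
qed

lemma bern_sum_pmf_product_identity:
  fixes k l :: int
  assumes "finite I" "\<forall>j\<in>I. 0 \<le> p j \<and> p j \<le> 1"
  defines "f \<equiv> pmf (bern_sum_pmf p I)" and "g \<equiv> \<lambda>j. pmf (bern_sum_pmf p (I - {j}))"
  shows "of_int (k - l) * f k * f l
    = (\<Sum>j\<in>I. p j * (1 - p j) * (g j (k - 1) * g j l - g j k * g j (l - 1)))"
proof -
  have "(\<Sum>j\<in>I. p j * (1 - p j) * (g j (k - 1) * g j l - g j k * g j (l - 1)))
      = (\<Sum>j\<in>I. p j * g j (k - 1) * f l - f k * (p j * g j (l - 1)))"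
  proof (intro sum.cong refl)
    fix j assume "j \<in> I"
    with assms have f_rec: "f n = (1 - p j) * g j n + p j * g j (n - 1)" for n
      unfolding f_def g_def by (intro pmf_bern_sum_remove) auto
    show "p j * (1 - p j) * (g j (k - 1) * g j l - g j k * g j (l - 1))
        = p j * g j (k - 1) * f l - f k * (p j * g j (l - 1))"
      unfolding f_rec by (simp add: algebra_simps)
  qed
  also have "\<dots> = (\<Sum>j\<in>I. p j * g j (k - 1)) * f l - f k * (\<Sum>j\<in>I. p j * g j (l - 1))"
    by (simp add: sum_subtractf sum_distrib_left sum_distrib_right)
  also have "\<dots> = of_int k * f k * f l - f k * (of_int l * f l)"
    using pmf_bern_sum_size_biased[OF assms(1,2)] unfolding f_def g_def by simp
  finally show ?thesis by (simp add: algebra_simps)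
qed

theorem lemmaA1:
  fixes p :: "nat \<Rightarrow> real" and m :: nat and k q :: int
  assumes "\<And>j. j \<in> {1..m} \<Longrightarrow> 0 \<le> p j \<and> p j \<le> 1"
    and "q \<ge> 1"
  shows "of_int q * pmf (bern_sum_pmf p {1..m}) k * pmf (bern_sum_pmf p {1..m}) (k - q)
    = (\<Sum>j=1..m. p j * (1 - p j) *
        (pmf (bern_sum_pmf p ({1..m} - {j})) (k - 1) * pmf (bern_sum_pmf p ({1..m} - {j})) (k - q)
         - pmf (bern_sum_pmf p ({1..m} - {j})) k * pmf (bern_sum_pmf p ({1..m} - {j})) (k - q - 1)))"
  using bern_sum_pmf_product_identity[of "{1..m}" p k "k - q"] assms(1) by simp

end
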